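(* Let $n\ge 3$ be an integer, $r\in\mathbb R$, and define $G_n(x;r)=\bigl((-1)^{n+1}\psi_2^{(n)}(x)\bigr)^r$ for $x>0$. Then: (1) $x\mapsto G_n(x;r)$ is strictly convex on $(0,\infty)$ for $r\in\left(-\infty,-\frac{1}{n-1}\right)\cup(0,\infty)$, and strictly concave on $(0,\infty)$ for $r\in\left(-\frac{1}{n+1},0\right)$. (2) For $r\in\left(-\infty,-\frac{1}{n-1}\right)$ and all $x,y>0$, $$\bigl((-1)^{n+1}\psi_2^{(n)}(x)\bigr)^r+\bigl((-1)^{n+1}\psi_2^{(n)}(y)\bigr)^r<\bigl((-1)^{n+1}\psi_2^{(n)}(x+y)\bigr)^r.$$ (3) For $r\in\left(-\frac{1}{n+1},0\right)$ and all $x,y>0$, $$\bigl((-1)^{n+1}\psi_2^{(n)}(x)\bigr)^r+\bigl((-1)^{n+1}\psi_2^{(n)}(y)\bigr)^r>\bigl((-1)^{n+1}\psi_2^{(n)}(x+y)\bigr)^r.$$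
   Context: For an integer $n\ge 2$ and $x>0$, the poly-double gamma function is defined by $$\psi_2^{(n)}(x)=(-1)^{n+1}\,n!\sum_{k=0}^{\infty}\frac{1+k}{(x+k)^{n+1}} .$$ Note that $(-1)^{n+1}\psi_2^{(n)}(x)>0$ for $x>0$. *)

theory Defs
  imports "HOL-Analysis.Analysis"
begin

definition psi2 :: "nat \<Rightarrow> real \<Rightarrow> real" where
  "psi2 n x = (-1) ^ (n + 1) * fact n * (\<Sum>k. (1 + real k) / (x + real k) ^ (n + 1))"

definition G :: "nat \<Rightarrow> real \<Rightarrow> real \<Rightarrow> real" where
  "G n r x = ((-1) ^ (n + 1) * psi2 n x) powr r"

definition strictly_convex_on :: "real set \<Rightarrow> (real \<Rightarrow> real) \<Rightarrow> bool" where
  "strictly_convex_on S f \<longleftrightarrow> convex S \<and>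
    (\<forall>x\<in>S. \<forall>y\<in>S. \<forall>t. x \<noteq> y \<longrightarrow> 0 < t \<longrightarrow> t < 1 \<longrightarrow>
       f ((1 - t) * x + t * y) < (1 - t) * f x + t * f y)"

definition strictly_concave_on :: "real set \<Rightarrow> (real \<Rightarrow> real) \<Rightarrow> bool" where
  "strictly_concave_on S f \<longleftrightarrow> strictly_convex_on S (\<lambda>x. - f x)"

end

theory Submission
  imports Defs "HOL-Probability.Distributions"
begin

(* Write F = (-1)^(n+1) psi2^(n) = n! zeta2 (n+1), where zeta2 j x = sum_k (1+k)/(x+k)^j.
   Then (F^r)'' = r F^(r-2) ((r-1) F'^2 + F F''), and the sign of (r-1) F'^2 + F F'' is decided by
   comparing zeta2 (n+2)^2 with zeta2 (n+1) zeta2 (n+3).  Cauchy-Schwarz gives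
   zeta2 (n+2)^2 <= zeta2 (n+1) zeta2 (n+3), which settles r > 0 and -1/(n+1) < r < 0.  For
   r < -1/(n-1) one needs the reverse estimate
   (n-1)(n+2) zeta2 (n+1) zeta2 (n+3) <= n(n+1) zeta2 (n+2)^2.  It follows from the representation
   m! zeta2 (m+1) x = integral over t > 0 of t^m e^(-xt) / (1 - e^(-t))^2: the weight
   t^2 e^(-xt) / (1 - e^(-t))^2 is log-concave, and the moments of a log-concave weight satisfy
   (k+1) m_k m_(k+2) <= (k+2) m_(k+1)^2, because the difference with the exponential weight having
   the same m_k and m_(k+1) changes sign at most twice.
   Finally, a strictly convex function on (0, oo) that tends to 0 at 0 is strictly superadditive,
   and F^r -> 0 at 0 for r < 0; this gives (2) and (3). *)

section \<open>Sign changes and moments of log-concave weights\<close>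

lemma convex_subset_Ioi_cases:
  fixes P :: "real set"
  assumes P: "P \<subseteq> {0<..}" "convex P"
  obtains (unbounded) a where "0 \<le> a" "\<And>t. a < t \<Longrightarrow> t \<in> P" "\<And>t. t < a \<Longrightarrow> t \<notin> P"
    | (bounded) a b where "0 \<le> a" "a \<le> b" "\<And>t. a < t \<Longrightarrow> t < b \<Longrightarrow> t \<in> P"
        "\<And>t. t < a \<or> b < t \<Longrightarrow> t \<notin> P"
proof -
  have between: "t \<in> P" if "p \<in> P" "q \<in> P" "p \<le> t" "t \<le> q" for p q t
    using P(2) that unfolding is_interval_convex_1[symmetric] is_interval_1 by blast
  have below: "bdd_below P"
    using P(1) by (intro bdd_belowI[of _ 0]) auto
  have above_Inf: "t \<in> P" if "Inf P < t" "\<exists>q\<in>P. t < q" for t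
    using between that cInf_less_iff[of P t] below by (metis empty_iff less_imp_le)
  show thesis
  proof (cases "P = {}")
    case True
    then show thesis by (intro bounded[of 0 0]) auto
  next
    case nonempty: False
    have Inf_nonneg: "0 \<le> Inf P"
      using P(1) nonempty by (intro cInf_greatest) auto
    have below_Inf: "t \<notin> P" if "t < Inf P" for t
      using that cInf_lower[OF _ below, of t] by linarith
    show thesis
    proof (cases "bdd_above P")
      case True
      show thesis
      proof (rule bounded[of "Inf P" "Sup P"])
        show "Inf P \<le> Sup P"
          using nonempty True below by (meson all_not_in_conv cInf_le_cSup)
        show "t \<in> P" if "Inf P < t" "t < Sup P" for t
          using that nonempty True by (intro above_Inf) (auto simp: less_cSup_iff)
        show "t \<notin> P" if "t < Inf P \<or> Sup P < t" for t
          using that below_Inf cSup_upper[OF _ True, of t] by fastforce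
      qed (fact Inf_nonneg)
    next
      case False
      show thesis
      proof (rule unbounded[of "Inf P"])
        show "t \<in> P" if "Inf P < t" for t
          using that False unfolding bdd_above_def by (intro above_Inf) (auto simp: not_le)
      qed (use Inf_nonneg below_Inf in auto)
    qed
  qed
qed

lemma convex_superlevel_concave:
  fixes f :: "'a::real_vector \<Rightarrow> real"
  assumes f: "concave_on S f"
  shows "convex {x \<in> S. c < f x}"
  unfolding convex_alt
proof (intro ballI allI impI)
  fix x y and u :: real
  assume x: "x \<in> {x \<in> S. c < f x}" and y: "y \<in> {x \<in> S. c < f x}" and u: "0 \<le> u \<and> u \<le> 1"
  have "convex S"
    using f unfolding concave_on_def by (rule convex_on_imp_convex)
  then have mem: "(1 - u) *\<^sub>R x + u *\<^sub>R y \<in> S"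
    using x y u by (simp add: convex_alt)
  have "c < min (f x) (f y)"
    using x y by simp
  also have "min (f x) (f y) = (1 - u) * min (f x) (f y) + u * min (f x) (f y)"
    by (simp add: algebra_simps)
  also have "\<dots> \<le> (1 - u) * f x + u * f y"
    using u by (intro add_mono mult_left_mono) auto
  also have "\<dots> \<le> f ((1 - u) *\<^sub>R x + u *\<^sub>R y)"
    using concave_onD[OF f, of u x y] x y u by simp
  finally show "(1 - u) *\<^sub>R x + u *\<^sub>R y \<in> {x \<in> S. c < f x}"
    using mem by simp
qed

lemma sign_pattern_of_concave:
  fixes D h :: "real \<Rightarrow> real"
  assumes D: "concave_on {0<..} D" and h: "\<And>t. t > 0 \<Longrightarrow> 0 < h t \<longleftrightarrow> 0 < D t"
  obtains (one) a where "0 \<le> a" "\<And>t. t > 0 \<Longrightarrow> (t - a) * h t \<ge> 0" "\<And>t. a < t \<Longrightarrow> 0 < h t"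
    | (two) a b where "\<And>t. t > 0 \<Longrightarrow> (t - a) * (t - b) * h t \<le> 0"
proof -
  let ?P = "{t \<in> {0<..}. 0 < D t}"
  have P: "t \<in> ?P \<longleftrightarrow> 0 < h t" if "t > 0" for t
    using h[OF that] that by simp
  have "?P \<subseteq> {0<..}" "convex ?P"
    using convex_superlevel_concave[OF D] by auto
  then show thesis
  proof (cases rule: convex_subset_Ioi_cases)
    case (unbounded a)
    show thesis
    proof (rule one[of a])
      show "(t - a) * h t \<ge> 0" if "t > 0" for t
        using unbounded P[OF that] by (cases "t < a"; cases "a < t") (auto simp: mult_nonpos_nonpos)
      show "0 < h t" if "a < t" for t
        using unbounded P that by auto
    qed (fact unbounded)
  next
    case (bounded a b)
    show thesis
    proof (rule two[of a b])
      fix t :: real assume "t > 0"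
      consider "a < t" "t < b" | "t < a \<or> b < t" | "t = a \<or> t = b"
        by linarith
      then show "(t - a) * (t - b) * h t \<le> 0"
      proof cases
        case 1
        then have "(t - a) * (t - b) < 0"
          by (simp add: mult_pos_neg)
        then show ?thesis
          using 1 bounded P[OF \<open>t > 0\<close>] by (simp add: mult_neg_pos less_imp_le)
      next
        case 2
        then have "(t - a) * (t - b) \<ge> 0"
          using bounded by (auto intro: mult_nonpos_nonpos)
        then show ?thesis
          using 2 bounded P[OF \<open>t > 0\<close>] by (intro mult_nonneg_nonpos) auto
      qed auto
    qed
  qed
qed

lemma has_bochner_integral_pos:
  fixes f :: "real \<Rightarrow> real"
  assumes f: "has_bochner_integral lborel f I"
    and nonneg: "\<And>t. f t \<ge> 0" and pos: "\<And>t. c < t \<Longrightarrow> f t > 0"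
  shows "I > 0"
proof -
  have "I \<ge> 0"
    using f nonneg by (auto simp: has_bochner_integral_iff intro: integral_nonneg)
  moreover have "I \<noteq> 0"
  proof
    assume "I = 0"
    then have "AE t in lborel. f t = 0"
      using f nonneg integral_nonneg_eq_0_iff_AE[of lborel f]
      by (simp add: has_bochner_integral_iff)
    then have "AE t in lborel. t \<notin> {c<..c + 1}"
      by eventually_elim (use pos in force)
    then have "emeasure lborel {c<..c + 1} = 0"
      by (subst (asm) AE_iff_measurable[of "{c<..c + 1}"]) auto
    then show False by simp
  qed
  ultimately show ?thesis by simp
qed

lemma power_moments_sign_change_one:
  fixes h :: "real \<Rightarrow> real"
  assumes h: "\<And>i. i \<le> 1 \<Longrightarrow>
      has_bochner_integral lborel (\<lambda>t. indicator {0<..} t * (t ^ (k + i) * h t)) (\<mu> i)"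
    and vanish: "\<mu> 0 = 0" "\<mu> 1 = 0"
    and "a \<ge> 0" and sign: "\<And>t. t > 0 \<Longrightarrow> (t - a) * h t \<ge> 0" and pos: "\<And>t. t > a \<Longrightarrow> h t > 0"
  shows False
proof -
  let ?g = "\<lambda>i t. indicator {0<..} t * (t ^ (k + i) * h t)"
  have "has_bochner_integral lborel (\<lambda>t. ?g 1 t - a * ?g 0 t) (\<mu> 1 - a * \<mu> 0)"
    by (intro has_bochner_integral_diff has_bochner_integral_mult_right h) auto
  moreover have "?g 1 t - a * ?g 0 t = indicator {0<..} t * (t ^ k * ((t - a) * h t))" for t
    by (simp add: algebra_simps)
  ultimately have "has_bochner_integral lborel (\<lambda>t. indicator {0<..} t * (t ^ k * ((t - a) * h t))) 0"
    using vanish by simp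
  moreover have "indicator {0<..} t * (t ^ k * ((t - a) * h t)) \<ge> 0" for t
    using sign[of t] by (cases "t > 0") simp_all
  moreover have "indicator {0<..} t * (t ^ k * ((t - a) * h t)) > 0" if "t > a" for t
    using that pos[of t] \<open>a \<ge> 0\<close> by simp
  ultimately have "(0::real) > 0"
    by (rule has_bochner_integral_pos)
  then show False by simp
qed

lemma power_moments_sign_change_two:
  fixes h :: "real \<Rightarrow> real"
  assumes h: "\<And>i. i \<le> 2 \<Longrightarrow>
      has_bochner_integral lborel (\<lambda>t. indicator {0<..} t * (t ^ (k + i) * h t)) (\<mu> i)"
    and vanish: "\<mu> 0 = 0" "\<mu> 1 = 0"
    and sign: "\<And>t. t > 0 \<Longrightarrow> (t - a) * (t - b) * h t \<le> 0"
  shows "\<mu> 2 \<le> 0"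
proof -
  let ?g = "\<lambda>i t. indicator {0<..} t * (t ^ (k + i) * h t)"
  have "has_bochner_integral lborel (\<lambda>t. ?g 2 t - (a + b) * ?g 1 t + a * b * ?g 0 t)
      (\<mu> 2 - (a + b) * \<mu> 1 + a * b * \<mu> 0)"
    by (intro has_bochner_integral_add has_bochner_integral_diff has_bochner_integral_mult_right h) auto
  moreover have "?g 2 t - (a + b) * ?g 1 t + a * b * ?g 0 t
      = indicator {0<..} t * (t ^ k * ((t - a) * (t - b) * h t))" for t
    by (simp add: power_add power2_eq_square algebra_simps)
  ultimately have "has_bochner_integral lborel
      (\<lambda>t. indicator {0<..} t * (t ^ k * ((t - a) * (t - b) * h t))) (\<mu> 2)"
    using vanish by simp
  moreover have "indicator {0<..} t * (t ^ k * ((t - a) * (t - b) * h t)) \<le> 0" for t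
    using sign[of t] by (cases "t > 0") (simp_all add: mult_nonneg_nonpos)
  ultimately show ?thesis
    using integral_mono[of lborel "\<lambda>t. indicator {0<..} t * (t ^ k * ((t - a) * (t - b) * h t))" "\<lambda>_. 0"]
    by (simp add: has_bochner_integral_iff)
qed

lemma has_bochner_integral_power_exp:
  fixes l c :: real
  assumes "l > 0" "c \<ge> 0"
  shows "has_bochner_integral lborel (\<lambda>t. indicator {0<..} t * (t ^ j * (c * exp (- (l * t)))))
           (c * fact j / l ^ Suc j)"
proof (rule has_bochner_integral_nn_integral)
  let ?C = "c * fact j / l ^ Suc j"
  have "AE t in lborel. ennreal (indicator {0<..} t * (t ^ j * (c * exp (- (l * t)))))
          = ennreal ?C * ennreal (erlang_density j l t)"
    using AE_lborel_singleton[of 0]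
  proof eventually_elim
    case (elim t)
    then show ?case
      using assms by (auto simp: erlang_density_def indicator_def ennreal_mult[symmetric] field_simps)
  qed
  then have "(\<integral>\<^sup>+t. ennreal (indicator {0<..} t * (t ^ j * (c * exp (- (l * t))))) \<partial>lborel)
      = ennreal ?C * (\<integral>\<^sup>+t. ennreal (erlang_density j l t) \<partial>lborel)"
    by (simp add: nn_integral_cong_AE nn_integral_cmult)
  also have "(\<integral>\<^sup>+t. ennreal (erlang_density j l t) \<partial>lborel) = 1"
    using nn_integral_erlang_ith_moment[OF assms(1), of j 0] by simp
  finally show "(\<integral>\<^sup>+t. ennreal (indicator {0<..} t * (t ^ j * (c * exp (- (l * t))))) \<partial>lborel)
      = ennreal ?C" by simp
qed (use assms in \<open>auto simp: indicator_def\<close>)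

lemma exponential_matching_two_moments:
  fixes m0 m1 :: real
  assumes m0: "m0 > 0" and m1: "m1 > 0"
  obtains \<alpha> \<beta> :: real and e :: "nat \<Rightarrow> real" where "\<alpha> > 0" "\<beta> > 0"
    "\<And>i. has_bochner_integral lborel
      (\<lambda>t. indicator {0<..} t * (t ^ (k + i) * (\<beta> * exp (- (\<alpha> * t))))) (e i)"
    "e 0 = m0" "e 1 = m1" "real (k + 1) * m0 * e 2 = real (k + 2) * m1\<^sup>2"
proof -
  define \<alpha> where "\<alpha> = real (k + 1) * m0 / m1"
  define \<beta> where "\<beta> = m0 * \<alpha> ^ Suc k / fact k"
  define e where "e i = \<beta> * fact (k + i) / \<alpha> ^ Suc (k + i)" for i
  have \<alpha>: "\<alpha> > 0" and \<beta>: "\<beta> > 0"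
    using m0 m1 by (simp_all add: \<alpha>_def \<beta>_def)
  have e_\<alpha>: "e i = m0 * (fact (k + i) / fact k) / \<alpha> ^ i" for i
    using \<alpha> by (simp add: e_def \<beta>_def power_add flip: add_Suc)
  have m1_\<alpha>: "m1 = real (k + 1) * m0 / \<alpha>"
    using m0 m1 by (simp add: \<alpha>_def)
  have fact_ratio: "fact (k + 1) / fact k = real (k + 1)"
    "fact (k + 2) / fact k = real (k + 1) * real (k + 2)"
    by (simp_all add: eval_nat_numeral)
  show thesis
  proof (rule that[OF \<alpha> \<beta>])
    show "has_bochner_integral lborel
      (\<lambda>t. indicator {0<..} t * (t ^ (k + i) * (\<beta> * exp (- (\<alpha> * t))))) (e i)" for i
      unfolding e_def using \<alpha> \<beta> by (intro has_bochner_integral_power_exp) auto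
    show "e 0 = m0" "e 1 = m1" "real (k + 1) * m0 * e 2 = real (k + 2) * m1\<^sup>2"
      unfolding e_\<alpha> fact_ratio m1_\<alpha> using \<alpha> by (simp_all add: field_simps power2_eq_square)
  qed
qed

lemma log_concave_power_moments:
  fixes L :: "real \<Rightarrow> real" and m :: "nat \<Rightarrow> real"
  assumes L: "concave_on {0<..} L"
    and m: "\<And>i. i \<le> 2 \<Longrightarrow>
      has_bochner_integral lborel (\<lambda>t. indicator {0<..} t * (t ^ (k + i) * exp (L t))) (m i)"
  shows "real (k + 1) * m 0 * m 2 \<le> real (k + 2) * (m 1)\<^sup>2"
proof -
  have m_pos: "m i > 0" if "i \<le> 2" for i
    using m[OF that] by (rule has_bochner_integral_pos[of _ _ 0]) (auto simp: indicator_def)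
  obtain \<alpha> \<beta> e where \<alpha>: "\<alpha> > 0" and \<beta>: "\<beta> > 0"
    and e_moments: "\<And>i. has_bochner_integral lborel
      (\<lambda>t. indicator {0<..} t * (t ^ (k + i) * (\<beta> * exp (- (\<alpha> * t))))) (e i)"
    and e: "e 0 = m 0" "e 1 = m 1" "real (k + 1) * m 0 * e 2 = real (k + 2) * (m 1)\<^sup>2"
    using exponential_matching_two_moments[OF m_pos[of 0] m_pos[of 1], where k = k] by auto
  \<comment> \<open>h has vanishing moments of order k and k + 1 but, being the difference of a log-concave
      and a log-linear function, changes sign at most twice.\<close>
  define h where "h t = exp (L t) - \<beta> * exp (- (\<alpha> * t))" for t
  have h_moments: "has_bochner_integral lborel (\<lambda>t. indicator {0<..} t * (t ^ (k + i) * h t)) (m i - e i)"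
    if "i \<le> 2" for i
    using has_bochner_integral_diff[OF m[OF that] e_moments[of i]] by (simp add: h_def algebra_simps)
  have "concave_on {0<..} (\<lambda>t. L t + \<alpha> * t - ln \<beta>)"
    using L \<alpha> by (intro concave_on_diff concave_on_add concave_on_cmul) (auto simp: concave_on_ident convex_on_const)
  moreover have "0 < h t \<longleftrightarrow> 0 < L t + \<alpha> * t - ln \<beta>" for t
  proof -
    have "\<beta> * exp (- (\<alpha> * t)) = exp (ln \<beta> - \<alpha> * t)"
      using \<beta> by (simp add: exp_diff exp_minus field_simps)
    then show ?thesis by (auto simp: h_def)
  qed
  ultimately show ?thesis
  proof (cases rule: sign_pattern_of_concave)
    case (one a)
    then have False
      using h_moments e by (intro power_moments_sign_change_one[of k h "\<lambda>i. m i - e i" a]) auto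
    then show ?thesis ..
  next
    case (two a b)
    have "m 2 - e 2 \<le> 0"
      by (rule power_moments_sign_change_two[of k h "\<lambda>i. m i - e i" a b]) (use h_moments e two in auto)
    then have "real (k + 1) * m 0 * m 2 \<le> real (k + 1) * m 0 * e 2"
      using m_pos[of 0] by (intro mult_left_mono) auto
    then show ?thesis
      by (simp only: e(3))
  qed
qed

section \<open>Strictly convex functions\<close>

lemma strictly_convex_onD:
  assumes "strictly_convex_on S f" "x \<in> S" "y \<in> S" "x \<noteq> y" "0 < t" "t < 1"
  shows "f ((1 - t) * x + t * y) < (1 - t) * f x + t * f y"
  using assms by (simp add: strictly_convex_on_def)

lemma strictly_convex_on_imp_convex_on:
  assumes "strictly_convex_on S f"
  shows "convex_on S f"
proof (rule convex_onI)
  fix t x y :: real assume "0 < t" "t < 1" "x \<in> S" "y \<in> S"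
  then show "f ((1 - t) *\<^sub>R x + t *\<^sub>R y) \<le> (1 - t) * f x + t * f y"
  proof (cases "x = y")
    case False
    then have "f ((1 - t) * x + t * y) < (1 - t) * f x + t * f y"
      using assms \<open>0 < t\<close> \<open>t < 1\<close> \<open>x \<in> S\<close> \<open>y \<in> S\<close> by (intro strictly_convex_onD)
    then show ?thesis by simp
  qed (simp add: algebra_simps)
qed (use assms in \<open>simp add: strictly_convex_on_def\<close>)

lemma strictly_convex_onI_less:
  assumes "convex S"
    and "\<And>x y t. x \<in> S \<Longrightarrow> y \<in> S \<Longrightarrow> x < y \<Longrightarrow> 0 < t \<Longrightarrow> t < 1 \<Longrightarrow>
      f ((1 - t) * x + t * y) < (1 - t) * f x + t * f y"
  shows "strictly_convex_on S f"
  unfolding strictly_convex_on_def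
proof (intro conjI ballI allI impI)
  fix x y t :: real assume xy: "x \<in> S" "y \<in> S" "x \<noteq> y" and t: "0 < t" "t < 1"
  then consider "x < y" | "y < x" by linarith
  then show "f ((1 - t) * x + t * y) < (1 - t) * f x + t * f y"
  proof cases
    case 2
    then have "f ((1 - (1 - t)) * y + (1 - t) * x) < (1 - (1 - t)) * f y + (1 - t) * f x"
      using assms(2)[of y x "1 - t"] xy t by simp
    then show ?thesis by (simp add: algebra_simps)
  qed (use assms(2) xy t in auto)
qed (fact assms(1))

lemma strictly_convex_on_deriv2_pos:
  fixes f f1 f2 :: "real \<Rightarrow> real"
  assumes S: "convex S"
    and f1: "\<And>x. x \<in> S \<Longrightarrow> (f has_real_derivative f1 x) (at x)"
    and f2: "\<And>x. x \<in> S \<Longrightarrow> (f1 has_real_derivative f2 x) (at x)"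
    and pos: "\<And>x. x \<in> S \<Longrightarrow> f2 x > 0"
  shows "strictly_convex_on S f"
proof (rule strictly_convex_onI_less[OF S])
  have between: "t \<in> S" if "u \<in> S" "v \<in> S" "u \<le> t" "t \<le> v" for u v t
    using S that unfolding is_interval_convex_1[symmetric] is_interval_1 by blast
  have mono: "f1 u < f1 v" if "u \<in> S" "v \<in> S" "u < v" for u v
    using \<open>u < v\<close>
  proof (rule DERIV_pos_imp_increasing)
    fix w assume "u \<le> w" "w \<le> v"
    then have "w \<in> S"
      using between that by blast
    then show "\<exists>y. (f1 has_real_derivative y) (at w) \<and> y > 0"
      using f2 pos by blast
  qed
  fix x y t :: real assume xy: "x \<in> S" "y \<in> S" "x < y" and t: "0 < t" "t < 1"
  obtain z where z: "z = (1 - t) * x + t * y" by simp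
  have zx: "z - x = t * (y - x)" and yz: "y - z = (1 - t) * (y - x)"
    unfolding z by (simp_all add: algebra_simps)
  have "0 < t * (y - x)" "0 < (1 - t) * (y - x)"
    using xy t by simp_all
  then have "x < z" "z < y"
    unfolding zx[symmetric] yz[symmetric] by simp_all
  have df: "(f has_real_derivative f1 w) (at w)" if "x \<le> w" "w \<le> y" for w
    using f1 between xy that by blast
  have "\<forall>w. x \<le> w \<and> w \<le> z \<longrightarrow> (f has_real_derivative f1 w) (at w)"
    using df \<open>z < y\<close> by auto
  then obtain a where a: "x < a" "a < z" "f z - f x = (z - x) * f1 a"
    using MVT2[OF \<open>x < z\<close>] by blast
  have "\<forall>w. z \<le> w \<and> w \<le> y \<longrightarrow> (f has_real_derivative f1 w) (at w)"
    using df \<open>x < z\<close> by auto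
  then obtain b where b: "z < b" "b < y" "f y - f z = (y - z) * f1 b"
    using MVT2[OF \<open>z < y\<close>] by blast
  have "f1 a < f1 b"
    using mono[of a b] between[of x y a] between[of x y b] xy a b by simp
  then have "(1 - t) * t * (y - x) * f1 a < (1 - t) * t * (y - x) * f1 b"
    using xy t by (intro mult_strict_left_mono) auto
  then have "(1 - t) * (f z - f x) < t * (f y - f z)"
    unfolding a(3) b(3) zx yz by (simp add: algebra_simps)
  then show "f ((1 - t) * x + t * y) < (1 - t) * f x + t * f y"
    unfolding z[symmetric] by (simp add: algebra_simps)
qed

lemma strictly_convex_on_scaled_powr:
  fixes F F' F'' :: "real \<Rightarrow> real"
  assumes S: "convex S" and F: "\<And>x. x \<in> S \<Longrightarrow> F x > 0"
    and F'_deriv: "\<And>x. x \<in> S \<Longrightarrow> (F has_real_derivative F' x) (at x)"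
    and F''_deriv: "\<And>x. x \<in> S \<Longrightarrow> (F' has_real_derivative F'' x) (at x)"
    and sign: "\<And>x. x \<in> S \<Longrightarrow> c * r * ((r - 1) * (F' x)\<^sup>2 + F x * F'' x) > 0"
  shows "strictly_convex_on S (\<lambda>x. c * F x powr r)"
proof (rule strictly_convex_on_deriv2_pos[OF S])
  fix x assume x: "x \<in> S"
  have "((\<lambda>x. F x powr r) has_real_derivative r * F x powr (r - 1) * F' x) (at x)"
    using DERIV_chain2[OF has_real_derivative_powr[OF F[OF x]] F'_deriv[OF x]] by simp
  then show "((\<lambda>x. c * F x powr r) has_real_derivative c * (r * F x powr (r - 1) * F' x)) (at x)"
    by (rule DERIV_cmult)
  have "((\<lambda>x. F x powr (r - 1)) has_real_derivative (r - 1) * F x powr (r - 2) * F' x) (at x)"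
    using DERIV_chain2[OF has_real_derivative_powr[OF F[OF x], of "r - 1"] F'_deriv[OF x]] by simp
  from DERIV_cmult[OF DERIV_mult[OF this F''_deriv[OF x]], of "c * r"]
  show "((\<lambda>x. c * (r * F x powr (r - 1) * F' x)) has_real_derivative
      c * r * ((r - 1) * F x powr (r - 2) * F' x * F' x + F x powr (r - 1) * F'' x)) (at x)"
    by (simp add: algebra_simps)
  have "F x powr (r - 1) = F x powr ((r - 2) + 1)"
    by simp
  also have "\<dots> = F x powr (r - 2) * F x"
    by (subst powr_add) (use F[OF x] in simp)
  finally have "c * r * ((r - 1) * F x powr (r - 2) * F' x * F' x + F x powr (r - 1) * F'' x)
      = F x powr (r - 2) * (c * r * ((r - 1) * (F' x)\<^sup>2 + F x * F'' x))"
    by (simp add: algebra_simps power2_eq_square)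
  also have "\<dots> > 0"
    using F[OF x] sign[OF x] by simp
  finally show "c * r * ((r - 1) * F x powr (r - 2) * F' x * F' x + F x powr (r - 1) * F'' x) > 0" .
qed

lemma convex_on_Ioi_le_ratio:
  fixes g :: "real \<Rightarrow> real"
  assumes g: "convex_on {0<..} g" and lim: "(g \<longlongrightarrow> 0) (at_right 0)" and uv: "0 < u" "u < v"
  shows "g u \<le> u / v * g v"
proof -
  have "\<forall>\<^sub>F e in at_right 0. g u \<le> ((v - u) * g e + (u - e) * g v) / (v - e)"
  proof -
    have "\<forall>\<^sub>F e in at_right (0::real). e < u"
      using uv by (auto simp: eventually_at_right_field intro!: exI[of _ u])
    then show ?thesis
      using eventually_at_right_less
    proof eventually_elim
      case (elim e)
      define s where "s = (u - e) / (v - e)"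
      have s: "0 \<le> s" "s \<le> 1" "1 - s = (v - u) / (v - e)"
        using elim uv by (auto simp: s_def field_simps)
      have "s * (v - e) = u - e"
        using elim uv by (simp add: s_def)
      then have "u = (1 - s) * e + s * v"
        by (simp add: algebra_simps)
      then have "g u \<le> (1 - s) * g e + s * g v"
        using convex_onD[OF g s(1,2), of e v] elim uv by simp
      also have "\<dots> = ((v - u) * g e + (u - e) * g v) / (v - e)"
        unfolding s(3) by (simp only: s_def add_divide_distrib times_divide_eq_left)
      finally show ?case .
    qed
  qed
  moreover have "((\<lambda>e. ((v - u) * g e + (u - e) * g v) / (v - e)) \<longlongrightarrow> u / v * g v) (at_right 0)"
    using uv by (auto intro!: tendsto_eq_intros lim)
  ultimately show ?thesis
    by (intro tendsto_lowerbound) auto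
qed

lemma strictly_convex_on_superadditive:
  fixes g :: "real \<Rightarrow> real"
  assumes g: "strictly_convex_on {0<..} g" and lim: "(g \<longlongrightarrow> 0) (at_right 0)"
    and x: "x > 0" and y: "y > 0"
  shows "g x + g y < g (x + y)"
proof -
  have less: "g a < a / (a + b) * g (a + b)" if a: "a > 0" and b: "b > 0" for a b
  proof -
    \<comment> \<open>Write a as a strict convex combination of a/2 and a + b, then bound g(a/2) by the ratio lemma.\<close>
    define s where "s = a / (a + 2 * b)"
    have s: "0 < s" "s < 1"
      using a b by (auto simp: s_def divide_simps)
    have "s * (a / 2 + b) = a / 2"
      using a b by (simp add: s_def field_simps)
    then have "a = (1 - s) * (a / 2) + s * (a + b)"
      by (simp add: field_simps)
    moreover have "g ((1 - s) * (a / 2) + s * (a + b)) < (1 - s) * g (a / 2) + s * g (a + b)"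
      using a b s by (intro strictly_convex_onD[OF g]) auto
    ultimately have "g a < (1 - s) * g (a / 2) + s * g (a + b)"
      by simp
    also have "\<dots> \<le> (1 - s) * ((a / 2) / (a + b) * g (a + b)) + s * g (a + b)"
      using convex_on_Ioi_le_ratio[OF strictly_convex_on_imp_convex_on[OF g] lim, of "a / 2" "a + b"] a b s
      by (intro add_mono mult_left_mono) auto
    also have "\<dots> = ((1 - s) * ((a / 2) / (a + b)) + s) * g (a + b)"
      by (simp add: algebra_simps)
    also have "(1 - s) * ((a / 2) / (a + b)) + s = a / (a + b)"
      using a b unfolding s_def by (simp add: divide_simps) (simp add: algebra_simps)
    finally show ?thesis .
  qed
  have "g x + g y < x / (x + y) * g (x + y) + y / (x + y) * g (x + y)"
    using less[OF x y] less[OF y x] by (simp add: add.commute)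
  also have "\<dots> = g (x + y)"
    using x y by (simp flip: distrib_right add_divide_distrib)
  finally show ?thesis .
qed

section \<open>Barnes' double zeta function\<close>

(* Grouping the pairs (a, b) with a + b = k: zeta2 j x = sum over a, b >= 0 of 1 / (x + a + b)^j. *)
definition zeta2 :: "nat \<Rightarrow> real \<Rightarrow> real" where
  "zeta2 j x = (\<Sum>k. (1 + real k) / (x + real k) ^ j)"

lemma summable_zeta2:
  assumes "x > 0" "j \<ge> 3"
  shows "summable (\<lambda>k. (1 + real k) / (x + real k) ^ j)"
proof (rule summable_comparison_test')
  show "summable (\<lambda>k. 2 * inverse (real k ^ 2))"
    by (intro summable_mult inverse_power_summable) simp
  fix k :: nat assume "k \<ge> 1"
  then have k: "real k \<ge> 1" by simp
  have "real k ^ 3 \<le> real k ^ j" using k assms(2) by (intro power_increasing) auto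
  also have "\<dots> \<le> (x + real k) ^ j" using assms by (intro power_mono) auto
  finally have "(1 + real k) / (x + real k) ^ j \<le> (2 * real k) / real k ^ 3"
    using k by (intro frac_le) auto
  also have "\<dots> = 2 * inverse (real k ^ 2)" using k by (simp add: power_eq_if field_simps)
  finally show "norm ((1 + real k) / (x + real k) ^ j) \<le> 2 * inverse (real k ^ 2)"
    using assms by simp
qed

lemma zeta2_ge_first_term:
  assumes "x > 0" "j \<ge> 3"
  shows "1 / x ^ j \<le> zeta2 j x"
  using sum_le_suminf[OF summable_zeta2[OF assms], of "{0}"] assms
  by (simp add: zeta2_def)

lemma zeta2_pos:
  assumes "x > 0" "j \<ge> 3"
  shows "zeta2 j x > 0"
  by (rule less_le_trans[OF _ zeta2_ge_first_term[OF assms]]) (use assms in simp)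

lemma has_real_derivative_zeta2_term:
  assumes "y + real k \<noteq> 0"
  shows "((\<lambda>y. (1 + real k) / (y + real k) ^ j) has_real_derivative
           - real j * ((1 + real k) / (y + real k) ^ Suc j)) (at y)"
proof -
  have "((\<lambda>y. (1 + real k) * inverse ((y + real k) ^ j)) has_real_derivative (1 + real k) *
      - (real j * (y + real k) ^ (j - 1) * (inverse ((y + real k) ^ j) * inverse ((y + real k) ^ j)))) (at y)"
    using assms by (auto intro!: derivative_eq_intros)
  moreover have "c * - (real j * z ^ (j - 1) * (inverse (z ^ j) * inverse (z ^ j))) = - real j * (c / z ^ Suc j)"
    if "z \<noteq> 0" for c z :: real
    using that by (cases j) (simp_all add: field_simps)
  ultimately show ?thesis
    using assms unfolding divide_inverse by metis
qed

lemma has_real_derivative_zeta2: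
  assumes "x > 0" "j \<ge> 3"
  shows "(zeta2 j has_real_derivative - real j * zeta2 (Suc j) x) (at x)"
proof -
  let ?A = "{x/2<..}"
  have "((\<lambda>y. \<Sum>k. (1 + real k) / (y + real k) ^ j) has_field_derivative
        (\<Sum>k. - real j * ((1 + real k) / (x + real k) ^ Suc j))) (at x)"
  proof (rule has_field_derivative_series'(2)[where S = ?A and x0 = x])
    show "convex ?A" by simp
    show "x \<in> interior ?A" using assms by (simp add: interior_open)
    show "x \<in> ?A" using assms by simp
    show "summable (\<lambda>k. (1 + real k) / (x + real k) ^ j)" by (rule summable_zeta2[OF assms])
    fix k y assume "y \<in> ?A"
    then show "((\<lambda>y. (1 + real k) / (y + real k) ^ j) has_real_derivative
           - real j * ((1 + real k) / (y + real k) ^ Suc j)) (at y within ?A)"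
      using assms by (intro has_field_derivative_at_within[OF has_real_derivative_zeta2_term]) simp
  next
    show "uniformly_convergent_on ?A (\<lambda>n y. \<Sum>k<n. - real j * ((1 + real k) / (y + real k) ^ Suc j))"
    proof (rule Weierstrass_m_test')
      show "summable (\<lambda>k. real j * ((1 + real k) / (x/2 + real k) ^ Suc j))"
        using assms by (intro summable_mult summable_zeta2) auto
      fix k y assume "y \<in> ?A"
      then have y: "y > x/2" by simp
      have "(x/2 + real k) ^ Suc j \<le> (y + real k) ^ Suc j"
        using y assms by (intro power_mono) auto
      then have "(1 + real k) / (y + real k) ^ Suc j \<le> (1 + real k) / (x/2 + real k) ^ Suc j"
        using assms y by (intro divide_left_mono) auto
      moreover have pos: "0 \<le> (1 + real k) / (y + real k) ^ Suc j" using y assms by simp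
      ultimately show "norm (- real j * ((1 + real k) / (y + real k) ^ Suc j))
             \<le> real j * ((1 + real k) / (x/2 + real k) ^ Suc j)"
        by (metis abs_mult abs_minus_cancel abs_of_nat abs_of_nonneg[OF pos] mult_left_mono
            of_nat_0_le_iff real_norm_def)
    qed
  qed
  also have "(\<Sum>k. - real j * ((1 + real k) / (x + real k) ^ Suc j)) = - real j * zeta2 (Suc j) x"
    unfolding zeta2_def using assms by (intro suminf_mult summable_zeta2) auto
  finally show ?thesis unfolding zeta2_def[abs_def] .
qed

lemma zeta2_log_convex:
  assumes x: "x > 0" and j: "j \<ge> 3"
  shows "(zeta2 (Suc j) x)\<^sup>2 \<le> zeta2 j x * zeta2 (j + 2) x"
proof -
  define a where "a i k = (1 + real k) / (x + real k) ^ i" for i k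
  define l where "l = zeta2 (Suc j) x / zeta2 (j + 2) x"
  have pos: "zeta2 (j + 2) x > 0"
    using zeta2_pos x j by simp
  have sums: "(\<lambda>k. a j k - 2 * l * a (Suc j) k + l\<^sup>2 * a (j + 2) k)
      sums (zeta2 j x - 2 * l * zeta2 (Suc j) x + l\<^sup>2 * zeta2 (j + 2) x)"
    unfolding zeta2_def a_def using x j
    by (intro sums_add sums_diff sums_mult summable_sums summable_zeta2) auto
  have nonneg: "a j k - 2 * l * a (Suc j) k + l\<^sup>2 * a (j + 2) k \<ge> 0" for k
  proof -
    have square: "A / z ^ j - 2 * l * (A / z ^ Suc j) + l\<^sup>2 * (A / z ^ (j + 2))
        = A / z ^ j * (1 - l / z)\<^sup>2" if "z > 0" for A z :: real
    proof -
      have "z ^ Suc j = z ^ j * z" "z ^ (j + 2) = z ^ j * z * z"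
        by (simp_all add: power_add power2_eq_square)
      moreover have "z ^ j > 0"
        using that by simp
      ultimately show ?thesis
        using that by (simp add: field_simps power2_eq_square del: power_Suc)
    qed
    have "a j k - 2 * l * a (Suc j) k + l\<^sup>2 * a (j + 2) k = a j k * (1 - l / (x + real k))\<^sup>2"
      unfolding a_def by (rule square) (use x in simp)
    also have "\<dots> \<ge> 0"
      unfolding a_def using x by (intro mult_nonneg_nonneg) auto
    finally show ?thesis .
  qed
  have "0 \<le> zeta2 j x - 2 * l * zeta2 (Suc j) x + l\<^sup>2 * zeta2 (j + 2) x"
    by (rule sums_le[OF _ sums_zero sums]) (use nonneg in simp)
  also have "\<dots> = zeta2 j x - (zeta2 (Suc j) x)\<^sup>2 / zeta2 (j + 2) x"
    using pos by (simp add: l_def field_simps power2_eq_square)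
  finally show ?thesis
    using pos by (simp add: field_simps)
qed

lemma sums_one_plus_times_exp:
  assumes "t > 0"
  shows "(\<lambda>k. (1 + real k) * exp (- (real k * t))) sums (1 / (1 - exp (- t))\<^sup>2)"
proof -
  have "(\<lambda>k. of_nat (Suc k) * exp (- t) ^ k) sums (1 / (1 - exp (- t))\<^sup>2)"
    using assms by (intro geometric_deriv_sums) simp
  moreover have "exp (- t) ^ k = exp (- (real k * t))" for k
    by (metis exp_of_nat_mult mult_minus_right)
  ultimately show ?thesis by (simp add: add.commute)
qed

lemma has_bochner_integral_zeta2:
  assumes "x > 0" "j \<ge> 2"
  shows "has_bochner_integral lborel
           (\<lambda>t. indicator {0<..} t * (t ^ j * exp (- (x * t)) / (1 - exp (- t))\<^sup>2))
           (fact j * zeta2 (Suc j) x)"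
proof (rule has_bochner_integral_nn_integral)
  define f where "f k t = indicator {0<..} t * (t ^ j * ((1 + real k) * exp (- ((x + real k) * t))))"
    for k t
  have summable: "summable (\<lambda>k. (1 + real k) / (x + real k) ^ Suc j)"
    using assms by (intro summable_zeta2) auto
  have "ennreal (indicator {0<..} t * (t ^ j * exp (- (x * t)) / (1 - exp (- t))\<^sup>2))
      = (\<Sum>k. ennreal (f k t))" for t
  proof (cases "t > 0")
    case True
    have "(\<lambda>k. t ^ j * exp (- (x * t)) * ((1 + real k) * exp (- (real k * t))))
        sums (t ^ j * exp (- (x * t)) * (1 / (1 - exp (- t))\<^sup>2))"
      by (intro sums_mult sums_one_plus_times_exp True)
    moreover have "t ^ j * exp (- (x * t)) * ((1 + real k) * exp (- (real k * t))) = f k t" for k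
      using True by (simp add: f_def exp_add[symmetric] algebra_simps)
    ultimately have "(\<lambda>k. f k t) sums (t ^ j * exp (- (x * t)) / (1 - exp (- t))\<^sup>2)"
      by simp
    moreover have "f k t \<ge> 0" for k
      using True by (simp add: f_def)
    ultimately show ?thesis
      using True by (simp add: suminf_ennreal2 sums_iff)
  qed (simp add: f_def)
  then have "(\<integral>\<^sup>+t. ennreal (indicator {0<..} t * (t ^ j * exp (- (x * t)) / (1 - exp (- t))\<^sup>2)) \<partial>lborel)
      = (\<Sum>k. \<integral>\<^sup>+t. ennreal (f k t) \<partial>lborel)"
    by (simp add: nn_integral_suminf f_def)
  also have "\<dots> = (\<Sum>k. ennreal (fact j * ((1 + real k) / (x + real k) ^ Suc j)))"
  proof (rule suminf_cong)
    fix k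
    have "has_bochner_integral lborel (f k) ((1 + real k) * fact j / (x + real k) ^ Suc j)"
      unfolding f_def using assms by (intro has_bochner_integral_power_exp) auto
    then show "(\<integral>\<^sup>+t. ennreal (f k t) \<partial>lborel) = ennreal (fact j * ((1 + real k) / (x + real k) ^ Suc j))"
      by (subst nn_integral_eq_integral) (auto simp: has_bochner_integral_iff f_def indicator_def mult_ac)
  qed
  also have "\<dots> = ennreal (fact j * zeta2 (Suc j) x)"
    using assms summable_mult[OF summable, of "fact j"] suminf_mult[OF summable, of "fact j"]
    by (subst suminf_ennreal2) (auto simp: zeta2_def)
  finally show "(\<integral>\<^sup>+t. ennreal (indicator {0<..} t * (t ^ j * exp (- (x * t)) / (1 - exp (- t))\<^sup>2)) \<partial>lborel)
      = ennreal (fact j * zeta2 (Suc j) x)" .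
qed (use assms zeta2_pos[of x "Suc j"] in \<open>auto simp: indicator_def\<close>)

lemma exp_mult_square_le_square_exp_minus_one:
  fixes t :: real
  assumes "t > 0"
  shows "t\<^sup>2 * exp t \<le> (exp t - 1)\<^sup>2"
proof -
  have "t / 2 \<le> (exp (t / 2) - inverse (exp (t / 2))) / 2"
    using assms by (intro real_le_x_sinh) simp
  then have "t * exp (t / 2) \<le> (exp (t / 2) - inverse (exp (t / 2))) * exp (t / 2)"
    by (intro mult_right_mono) auto
  also have "\<dots> = exp t - 1"
    by (simp add: algebra_simps flip: exp_add)
  finally have "(t * exp (t / 2))\<^sup>2 \<le> (exp t - 1)\<^sup>2"
    using assms by (intro power_mono) auto
  then show ?thesis
    by (simp add: power2_eq_square algebra_simps flip: exp_add)
qed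

lemma concave_on_ln_div_one_minus_exp:
  "concave_on {0<..} (\<lambda>t. ln t - ln (1 - exp (- t)))"
proof (rule f''_le0_imp_concave[where f' = "\<lambda>t. 1 / t - 1 / (exp t - 1)"
      and f'' = "\<lambda>t. - 1 / t\<^sup>2 + exp t / (exp t - 1)\<^sup>2"])
  fix t :: real assume "t \<in> {0<..}"
  then have t: "t > 0" by simp
  then have "exp (- t) < 1" "exp t > 1" by simp_all
  then have "((\<lambda>t. ln t - ln (1 - exp (- t))) has_real_derivative
      1 / t - exp (- t) / (1 - exp (- t))) (at t)"
    using t by (auto intro!: derivative_eq_intros simp: field_simps)
  moreover have "exp (- t) / (1 - exp (- t)) = 1 / (exp t - 1)"
    using \<open>exp t > 1\<close> by (simp add: exp_minus field_simps)
  ultimately show "((\<lambda>t. ln t - ln (1 - exp (- t))) has_real_derivative 1 / t - 1 / (exp t - 1)) (at t)"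
    by simp
  show "((\<lambda>t. 1 / t - 1 / (exp t - 1)) has_real_derivative - 1 / t\<^sup>2 + exp t / (exp t - 1)\<^sup>2) (at t)"
    using t by (auto intro!: derivative_eq_intros simp: field_simps power2_eq_square)
  have "exp t / (exp t - 1)\<^sup>2 \<le> 1 / t\<^sup>2"
    using exp_mult_square_le_square_exp_minus_one[OF t] t \<open>exp t > 1\<close>
    by (simp add: divide_simps mult.commute)
  then show "- 1 / t\<^sup>2 + exp t / (exp t - 1)\<^sup>2 \<le> 0" by simp
qed simp

lemma zeta2_moment_inequality:
  assumes x: "x > 0"
  shows "real (k + 1) * real (k + 4) * (zeta2 (k + 3) x * zeta2 (k + 5) x)
           \<le> real (k + 2) * real (k + 3) * (zeta2 (k + 4) x)\<^sup>2"
proof -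
  define L where "L t = 2 * (ln t - ln (1 - exp (- t))) - x * t" for t
  define m where "m i = fact (k + 2 + i) * zeta2 (Suc (k + 2 + i)) x" for i
  have "concave_on {0<..} L"
    unfolding L_def using x
    by (intro concave_on_diff[OF concave_on_cmul[OF _ concave_on_ln_div_one_minus_exp]] convex_on_cmul)
      (auto simp: convex_on_ident)
  moreover have "has_bochner_integral lborel (\<lambda>t. indicator {0<..} t * (t ^ (k + i) * exp (L t))) (m i)"
    for i
  proof -
    have "t ^ (k + 2 + i) * exp (- (x * t)) / (1 - exp (- t))\<^sup>2 = t ^ (k + i) * exp (L t)" if "t > 0" for t
    proof -
      have "exp (L t) = exp (ln t) ^ 2 / exp (ln (1 - exp (- t))) ^ 2 * exp (- (x * t))"
        unfolding L_def by (simp add: exp_diff power2_eq_square exp_minus field_simps flip: exp_add)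
      then show ?thesis
        using that by (simp add: power_add power2_eq_square field_simps)
    qed
    then show ?thesis
      using has_bochner_integral_zeta2[OF x, of "k + 2 + i"]
      by (subst has_bochner_integral_cong[OF refl _ refl, where g = "\<lambda>t. indicator {0<..} t *
            (t ^ (k + 2 + i) * exp (- (x * t)) / (1 - exp (- t))\<^sup>2)"])
        (auto simp: m_def indicator_def add.assoc)
  qed
  ultimately have "real (k + 1) * m 0 * m 2 \<le> real (k + 2) * (m 1)\<^sup>2"
    by (rule log_concave_power_moments)
  moreover have "fact (k + 3) = real (k + 3) * fact (k + 2)"
    "fact (k + 4) = real (k + 4) * real (k + 3) * fact (k + 2)"
    by (simp_all add: eval_nat_numeral)
  ultimately have "real (k + 3) * (fact (k + 2))\<^sup>2
        * (real (k + 1) * real (k + 4) * (zeta2 (k + 3) x * zeta2 (k + 5) x))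
      \<le> real (k + 3) * (fact (k + 2))\<^sup>2 * (real (k + 2) * real (k + 3) * (zeta2 (k + 4) x)\<^sup>2)"
    by (simp add: m_def eval_nat_numeral algebra_simps power2_eq_square)
  then show ?thesis
    by (simp add: mult_le_cancel_left_pos)
qed

section \<open>The powers of the poly-double gamma function\<close>

lemma psi2_sign_normalized: "(-1) ^ (n + 1) * psi2 n x = fact n * zeta2 (n + 1) x"
proof -
  have "(-1) ^ (n + 1) * psi2 n x = ((-1) ^ (n + 1) * (-1) ^ (n + 1)) * (fact n * zeta2 (n + 1) x)"
    unfolding psi2_def zeta2_def by (simp only: mult.assoc)
  also have "(-1 :: real) ^ (n + 1) * (-1) ^ (n + 1) = 1"
    by (simp flip: power_mult_distrib)
  finally show ?thesis
    by simp
qed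

lemma G_eq_powr: "G n r x = (fact n * zeta2 (n + 1) x) powr r"
  unfolding G_def psi2_sign_normalized ..

(* For F = (-1)^(n+1) psi2 n: (r - 1) F'^2 + F F'' = (n!)^2 (n + 1) G_curvature n r. *)
definition G_curvature :: "nat \<Rightarrow> real \<Rightarrow> real \<Rightarrow> real" where
  "G_curvature n r x = (r - 1) * real (n + 1) * (zeta2 (n + 2) x)\<^sup>2
     + real (n + 2) * zeta2 (n + 1) x * zeta2 (n + 3) x"

lemma strictly_convex_on_scaled_G:
  assumes n: "n \<ge> 2" and sign: "\<And>x. x > 0 \<Longrightarrow> c * r * G_curvature n r x > 0"
  shows "strictly_convex_on {0<..} (\<lambda>x. c * G n r x)"
proof -
  let ?F = "\<lambda>x. fact n * zeta2 (n + 1) x"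
  let ?F1 = "\<lambda>x. - (fact n * real (n + 1) * zeta2 (n + 2) x)"
  let ?F2 = "\<lambda>x. fact n * real (n + 1) * real (n + 2) * zeta2 (n + 3) x"
  have "strictly_convex_on {0<..} (\<lambda>x. c * ?F x powr r)"
  proof (rule strictly_convex_on_scaled_powr[where F' = ?F1 and F'' = ?F2])
    fix x :: real assume "x \<in> {0<..}"
    then have x: "x > 0" by simp
    show "?F x > 0"
      using zeta2_pos[OF x] n by simp
    show "(?F has_real_derivative ?F1 x) (at x)"
      using DERIV_cmult[OF has_real_derivative_zeta2[OF x, of "n + 1"], of "fact n"] n
      by (simp add: algebra_simps)
    show "(?F1 has_real_derivative ?F2 x) (at x)"
      using DERIV_minus[OF DERIV_cmult[OF has_real_derivative_zeta2[OF x, of "n + 2"], of "fact n * real (n + 1)"]] n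
      by (simp add: algebra_simps eval_nat_numeral)
    have "c * r * ((r - 1) * (?F1 x)\<^sup>2 + ?F x * ?F2 x) = (fact n)\<^sup>2 * real (n + 1) * (c * r * G_curvature n r x)"
      by (simp add: G_curvature_def algebra_simps power2_eq_square)
    also have "\<dots> > 0"
      using sign[OF x] by simp
    finally show "c * r * ((r - 1) * (?F1 x)\<^sup>2 + ?F x * ?F2 x) > 0" .
  qed simp
  then show ?thesis
    by (simp add: G_eq_powr)
qed

lemma G_curvature_pos:
  assumes n: "n \<ge> 2" and x: "x > 0" and r: "- 1 / (real n + 1) < r"
  shows "G_curvature n r x > 0"
proof -
  have "(zeta2 (n + 2) x)\<^sup>2 \<le> zeta2 (n + 1) x * zeta2 (n + 3) x"
    using zeta2_log_convex[OF x, of "n + 1"] n by (simp add: numeral_eq_Suc)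
  then have "real (n + 2) * (zeta2 (n + 2) x)\<^sup>2 \<le> real (n + 2) * (zeta2 (n + 1) x * zeta2 (n + 3) x)"
    by (rule mult_left_mono) simp
  then have "(r * (real n + 1) + 1) * (zeta2 (n + 2) x)\<^sup>2 \<le> G_curvature n r x"
    unfolding G_curvature_def by (simp add: algebra_simps)
  moreover have "r * (real n + 1) + 1 > 0"
    using r by (simp add: field_simps)
  then have "(r * (real n + 1) + 1) * (zeta2 (n + 2) x)\<^sup>2 > 0"
    using zeta2_pos[OF x, of "n + 2"] n by simp
  ultimately show ?thesis
    by linarith
qed

lemma G_curvature_neg:
  assumes n: "n \<ge> 2" and x: "x > 0" and r: "r < - 1 / (real n - 1)"
  shows "G_curvature n r x < 0"
proof -
  obtain k where k: "n = k + 2"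
    using n by (metis add.commute le_Suc_ex)
  have "(real n - 1) * real (n + 2) * (zeta2 (n + 1) x * zeta2 (n + 3) x)
      \<le> real n * real (n + 1) * (zeta2 (n + 2) x)\<^sup>2"
    using zeta2_moment_inequality[OF x, of k] unfolding k by (simp add: algebra_simps numeral_eq_Suc)
  then have "(real n - 1) * G_curvature n r x \<le> (real n + 1) * ((real n - 1) * r + 1) * (zeta2 (n + 2) x)\<^sup>2"
    unfolding G_curvature_def by (simp add: algebra_simps)
  moreover have "(real n - 1) * r + 1 < 0"
    using r n by (simp add: field_simps)
  then have "(real n + 1) * ((real n - 1) * r + 1) * (zeta2 (n + 2) x)\<^sup>2 < 0"
    using zeta2_pos[OF x, of "n + 2"] n by (simp add: mult_pos_neg mult_neg_pos)
  ultimately have "(real n - 1) * G_curvature n r x < 0"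
    by linarith
  then show ?thesis
    using n by (simp add: mult_less_0_iff)
qed

lemma tendsto_G_at_right_0:
  assumes n: "n \<ge> 2" and r: "r < 0"
  shows "(G n r \<longlongrightarrow> 0) (at_right 0)"
proof -
  have "\<forall>\<^sub>F x in at_right (0::real). x < 1"
    by (auto simp: eventually_at_right_field intro!: exI[of _ 1])
  then have "\<forall>\<^sub>F x in at_right 0. inverse x \<le> fact n * zeta2 (n + 1) x"
    using eventually_at_right_less[of 0]
  proof eventually_elim
    case (elim x)
    then have "inverse x \<le> 1 / x ^ (n + 1)"
      by (simp add: divide_simps power_le_one)
    also have "\<dots> \<le> zeta2 (n + 1) x"
      using zeta2_ge_first_term[of x "n + 1"] elim n by simp
    also have "\<dots> \<le> fact n * zeta2 (n + 1) x"
      using zeta2_pos[of x "n + 1"] elim n by (simp add: mult_le_cancel_right1)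
    finally show ?case .
  qed
  then have "filterlim (\<lambda>x. fact n * zeta2 (n + 1) x) at_top (at_right 0)"
    by (rule filterlim_at_top_mono[OF filterlim_inverse_at_top_right])
  then show ?thesis
    unfolding G_eq_powr[abs_def] by (rule tendsto_neg_powr[OF r])
qed

lemma strictly_convex_on_G:
  assumes n: "n \<ge> 2" and r: "r < - 1 / (real n - 1) \<or> r > 0"
  shows "strictly_convex_on {0<..} (G n r)"
proof -
  have "1 * r * G_curvature n r x > 0" if x: "x > 0" for x
    using r
  proof
    assume r: "r < - 1 / (real n - 1)"
    moreover have "- 1 / (real n - 1) < 0"
      using n by simp
    ultimately have "r < 0"
      by linarith
    then show ?thesis
      using G_curvature_neg[OF n x r] by (simp add: mult_neg_neg)
  next
    assume "r > 0"
    moreover have "- 1 / (real n + 1) < 0"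
      by (simp add: add_pos_pos)
    ultimately have "G_curvature n r x > 0"
      by (intro G_curvature_pos[OF n x]) linarith
    with \<open>r > 0\<close> show ?thesis
      by simp
  qed
  then show ?thesis
    using strictly_convex_on_scaled_G[OF n, of 1 r] by simp
qed

lemma strictly_concave_on_G:
  assumes n: "n \<ge> 2" and r: "- 1 / (real n + 1) < r" "r < 0"
  shows "strictly_concave_on {0<..} (G n r)"
proof -
  have "- 1 * r * G_curvature n r x > 0" if "x > 0" for x
    using G_curvature_pos[OF n that r(1)] r(2) by (simp add: mult_neg_pos)
  then show ?thesis
    using strictly_convex_on_scaled_G[OF n, of "- 1" r] by (simp add: strictly_concave_on_def)
qed

theorem theorem3p5:
  fixes n :: nat
  assumes "n \<ge> 3"
  shows "(\<forall>r::real. (r < - 1 / (real n - 1) \<or> r > 0) \<longrightarrow>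
            strictly_convex_on {0<..} (G n r))
       \<and> (\<forall>r::real. - 1 / (real n + 1) < r \<and> r < 0 \<longrightarrow>
            strictly_concave_on {0<..} (G n r))
       \<and> (\<forall>r::real. \<forall>x y::real. r < - 1 / (real n - 1) \<and> x > 0 \<and> y > 0 \<longrightarrow>
            ((-1) ^ (n + 1) * psi2 n x) powr r + ((-1) ^ (n + 1) * psi2 n y) powr r
              < ((-1) ^ (n + 1) * psi2 n (x + y)) powr r)
       \<and> (\<forall>r::real. \<forall>x y::real. - 1 / (real n + 1) < r \<and> r < 0 \<and> x > 0 \<and> y > 0 \<longrightarrow>
            ((-1) ^ (n + 1) * psi2 n x) powr r + ((-1) ^ (n + 1) * psi2 n y) powr r
              > ((-1) ^ (n + 1) * psi2 n (x + y)) powr r)"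
proof -
  have n: "n \<ge> 2"
    using assms by simp
  have "G n r x + G n r y < G n r (x + y)" if "r < - 1 / (real n - 1)" "x > 0" "y > 0" for r x y
  proof (rule strictly_convex_on_superadditive)
    show "strictly_convex_on {0<..} (G n r)"
      using strictly_convex_on_G[OF n] that(1) by blast
    have "- 1 / (real n - 1) < 0"
      using n by simp
    then show "(G n r \<longlongrightarrow> 0) (at_right 0)"
      using that(1) by (intro tendsto_G_at_right_0[OF n]) linarith
  qed (use that in auto)
  moreover have "- G n r x + - G n r y < - G n r (x + y)"
    if "- 1 / (real n + 1) < r" "r < 0" "x > 0" "y > 0" for r x y
  proof (rule strictly_convex_on_superadditive)
    show "strictly_convex_on {0<..} (\<lambda>x. - G n r x)"
      using strictly_concave_on_G[OF n that(1,2)] by (simp add: strictly_concave_on_def)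
    show "((\<lambda>x. - G n r x) \<longlongrightarrow> 0) (at_right 0)"
      using tendsto_minus[OF tendsto_G_at_right_0[OF n that(2)]] by simp
  qed (use that in auto)
  ultimately show ?thesis
    using strictly_convex_on_G[OF n] strictly_concave_on_G[OF n] unfolding G_def by fastforce
qed

end
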